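(* A countably infinite disconnected graph $G$ is ME-homogeneous if and only if $G\cong I_\omega[K_\omega]$ or $G\cong I_\omega[K_n]$ for some positive integer $n$.
   Context: All graphs are undirected and loopless; subgraphs are induced. A monomorphism is an injective map sending adjacent vertices to adjacent vertices. $G$ is ME-homogeneous if every monomorphism between finite induced subgraphs of $G$ is the restriction of a surjective endomorphism of $G$. $K_\kappa$ is the complete graph and $I_\kappa$ the edgeless graph on $\kappa$ vertices; the lexicographic product $G[H]$ has vertex set $G\times H$ with $(g,h)\sim(g',h')$ iff $g\sim g'$, or $g=g'$ and $h\sim h'$. Thus $I_\omega[K_m]$ is a disjoint union of countably many copies of $K_m$. *)

theory Defs
  imports Main "HOL-Library.Countable_Set"
begin

definition graph :: "'a set \<Rightarrow> ('a \<Rightarrow> 'a \<Rightarrow> bool) \<Rightarrow> bool" where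
  "graph V E \<longleftrightarrow> (\<forall>x y. E x y \<longrightarrow> x \<in> V \<and> y \<in> V \<and> E y x \<and> x \<noteq> y)"

definition monomorphism :: "('a \<Rightarrow> 'a \<Rightarrow> bool) \<Rightarrow> 'a set \<Rightarrow> 'a set \<Rightarrow> ('a \<Rightarrow> 'a) \<Rightarrow> bool" where
  "monomorphism E A B f \<longleftrightarrow> f ` A \<subseteq> B \<and> inj_on f A \<and>
     (\<forall>x\<in>A. \<forall>y\<in>A. E x y \<longrightarrow> E (f x) (f y))"

definition endomorphism :: "'a set \<Rightarrow> ('a \<Rightarrow> 'a \<Rightarrow> bool) \<Rightarrow> ('a \<Rightarrow> 'a) \<Rightarrow> bool" where
  "endomorphism V E h \<longleftrightarrow> h ` V \<subseteq> V \<and> (\<forall>x\<in>V. \<forall>y\<in>V. E x y \<longrightarrow> E (h x) (h y))"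

definition ME_homogeneous :: "'a set \<Rightarrow> ('a \<Rightarrow> 'a \<Rightarrow> bool) \<Rightarrow> bool" where
  "ME_homogeneous V E \<longleftrightarrow>
     (\<forall>A B f. finite A \<and> A \<subseteq> V \<and> finite B \<and> B \<subseteq> V \<and> monomorphism E A B f \<longrightarrow>
        (\<exists>h. endomorphism V E h \<and> h ` V = V \<and> (\<forall>x\<in>A. h x = f x)))"

definition connected_graph :: "'a set \<Rightarrow> ('a \<Rightarrow> 'a \<Rightarrow> bool) \<Rightarrow> bool" where
  "connected_graph V E \<longleftrightarrow> (\<forall>x\<in>V. \<forall>y\<in>V. E\<^sup>*\<^sup>* x y)"

definition graph_iso :: "'a set \<Rightarrow> ('a \<Rightarrow> 'a \<Rightarrow> bool) \<Rightarrow> 'b set \<Rightarrow> ('b \<Rightarrow> 'b \<Rightarrow> bool) \<Rightarrow> bool" where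
  "graph_iso V E V' E' \<longleftrightarrow>
     (\<exists>f. bij_betw f V V' \<and> (\<forall>x\<in>V. \<forall>y\<in>V. E x y \<longleftrightarrow> E' (f x) (f y)))"

definition complete_E :: "'a set \<Rightarrow> 'a \<Rightarrow> 'a \<Rightarrow> bool" where
  "complete_E V x y \<longleftrightarrow> x \<in> V \<and> y \<in> V \<and> x \<noteq> y"

definition edgeless_E :: "'a \<Rightarrow> 'a \<Rightarrow> bool" where
  "edgeless_E x y \<longleftrightarrow> False"

definition lex_E :: "'a set \<Rightarrow> ('a \<Rightarrow> 'a \<Rightarrow> bool) \<Rightarrow> 'b set \<Rightarrow> ('b \<Rightarrow> 'b \<Rightarrow> bool)
    \<Rightarrow> 'a \<times> 'b \<Rightarrow> 'a \<times> 'b \<Rightarrow> bool" where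
  "lex_E VG EG VH EH p q \<longleftrightarrow>
     p \<in> VG \<times> VH \<and> q \<in> VG \<times> VH \<and>
     (EG (fst p) (fst q) \<or> (fst p = fst q \<and> EH (snd p) (snd q)))"

abbreviation I_omega_K_omega_V :: "(nat \<times> nat) set" where
  "I_omega_K_omega_V \<equiv> (UNIV :: nat set) \<times> (UNIV :: nat set)"
abbreviation I_omega_K_omega_E :: "nat \<times> nat \<Rightarrow> nat \<times> nat \<Rightarrow> bool" where
  "I_omega_K_omega_E \<equiv> lex_E UNIV edgeless_E UNIV (complete_E UNIV)"
abbreviation I_omega_K_V :: "nat \<Rightarrow> (nat \<times> nat) set" where
  "I_omega_K_V n \<equiv> (UNIV :: nat set) \<times> {..<n}"
abbreviation I_omega_K_E :: "nat \<Rightarrow> nat \<times> nat \<Rightarrow> nat \<times> nat \<Rightarrow> bool" where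
  "I_omega_K_E n \<equiv> lex_E UNIV edgeless_E {..<n} (complete_E {..<n})"

end

theory Submission
  imports Defs
begin

text \<open>A surjective endomorphism maps components into components. If a component contained two
  non-adjacent vertices, ME-homogeneity would send them to vertices of different components; so
  every component is a clique, namely the closed neighbourhood of any of its vertices. Mapping one
  vertex to another embeds its component into the other one, so all components have the same
  size. There are infinitely many of them: otherwise some component is infinite, and sending a
  vertex of another component into it gives a surjective endomorphism identifying two of the
  finitely many components, which is impossible. Hence the graph is I_omega[K_kappa], kappa being
  the common size of the components.

  Conversely, a monomorphism of I_omega[K_kappa] between finite sets maps cliques into cliques;
  extending the induced map on clique indices to a surjection of the natural numbers, and its
  restriction to each clique to a permutation of K_kappa, yields the required surjective
  endomorphism.\<close>

lemma countably_infinite_bij_betw: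
  assumes "countable A" "infinite A" "countable B" "infinite B"
  obtains g where "bij_betw g A B"
  using bij_betw_trans[OF to_nat_on_infinite[OF assms(1,2)] bij_betw_from_nat_into[OF assms(3,4)]]
  by blast

lemma countable_extend_inj_on_to_permutation:
  assumes S: "countable S" and D: "finite D" "D \<subseteq> S" and p: "inj_on p D" "p ` D \<subseteq> S"
  obtains \<pi> where "bij_betw \<pi> S S" "\<forall>x\<in>D. \<pi> x = p x"
proof -
  obtain g where g: "bij_betw g (S - D) (S - p ` D)"
  proof (cases "finite S")
    case True
    have "card (S - D) = card (S - p ` D)"
      using True D p by (simp add: card_Diff_subset finite_subset card_image)
    then show ?thesis using True finite_same_card_bij that by blast
  next
    case False
    then have "infinite (S - D)" "infinite (S - p ` D)" using D by auto
    then show ?thesis using S that countably_infinite_bij_betw by (meson countable_Diff)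
  qed
  define \<pi> where "\<pi> x = (if x \<in> D then p x else g x)" for x
  have "bij_betw \<pi> (D \<union> (S - D)) (p ` D \<union> (S - p ` D))"
  proof (rule bij_betw_combine)
    show "bij_betw \<pi> D (p ` D)"
      using p unfolding bij_betw_def \<pi>_def by (auto simp: inj_on_def)
    show "bij_betw \<pi> (S - D) (S - p ` D)"
      using g by (rule bij_betw_cong[THEN iffD1, rotated]) (auto simp: \<pi>_def)
  qed auto
  moreover have "D \<union> (S - D) = S" "p ` D \<union> (S - p ` D) = S" using D p by auto
  moreover have "\<forall>x\<in>D. \<pi> x = p x" by (simp add: \<pi>_def)
  ultimately show ?thesis using that by simp
qed

lemma countable_extend_to_surjection:
  assumes "countable S" "infinite S" "finite I" "I \<subseteq> S" "\<sigma> ` I \<subseteq> S"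
  obtains \<tau> where "\<tau> ` S = S" "\<forall>i\<in>I. \<tau> i = \<sigma> i"
proof -
  obtain t where t: "bij_betw t (S - I) S"
    using assms countably_infinite_bij_betw by (meson countable_Diff Diff_infinite_finite)
  define \<tau> where "\<tau> i = (if i \<in> I then \<sigma> i else t i)" for i
  have "\<tau> ` S = \<sigma> ` I \<union> t ` (S - I)"
    using \<open>I \<subseteq> S\<close> unfolding \<tau>_def by auto
  also have "\<dots> = S" using t \<open>\<sigma> ` I \<subseteq> S\<close> by (auto simp: bij_betw_def)
  moreover have "\<forall>i\<in>I. \<tau> i = \<sigma> i" by (simp add: \<tau>_def)
  ultimately show ?thesis using that by simp
qed

section \<open>ME-homogeneity is an isomorphism invariant\<close>

lemma graph_iso_of_inverse:
  assumes "bij_betw \<phi> W V" "\<And>x y. x \<in> W \<Longrightarrow> y \<in> W \<Longrightarrow> E (\<phi> x) (\<phi> y) \<longleftrightarrow> F x y"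
  shows "graph_iso V E W F"
proof -
  let ?\<psi> = "inv_into W \<phi>"
  have \<psi>: "bij_betw ?\<psi> V W" by (rule bij_betw_inv_into[OF assms(1)])
  have "E x y \<longleftrightarrow> F (?\<psi> x) (?\<psi> y)" if "x \<in> V" "y \<in> V" for x y
  proof -
    have "\<phi> (?\<psi> x) = x" "\<phi> (?\<psi> y) = y"
      using assms(1) that by (simp_all add: bij_betw_inv_into_right)
    moreover have "?\<psi> x \<in> W" "?\<psi> y \<in> W" using \<psi> that bij_betwE by blast+
    ultimately show ?thesis using assms(2) by metis
  qed
  then show ?thesis unfolding graph_iso_def using \<psi> by blast
qed

context
  fixes V :: "'a set" and W :: "'b set" and E F and \<phi> :: "'a \<Rightarrow> 'b" and \<psi> :: "'b \<Rightarrow> 'a"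
  assumes \<phi>: "\<phi> ` V \<subseteq> W" and \<psi>: "\<psi> ` W \<subseteq> V"
    and \<psi>\<phi>: "\<And>x. x \<in> V \<Longrightarrow> \<psi> (\<phi> x) = x" and \<phi>\<psi>: "\<And>y. y \<in> W \<Longrightarrow> \<phi> (\<psi> y) = y"
    and \<phi>E: "\<And>x y. x \<in> V \<Longrightarrow> y \<in> V \<Longrightarrow> E x y \<longleftrightarrow> F (\<phi> x) (\<phi> y)"
begin

lemma inverse_pair_image_eq: "\<phi> ` V = W" "\<psi> ` W = V"
  using \<phi> \<psi> \<phi>\<psi> \<psi>\<phi> by force+

lemma monomorphism_conjugate:
  assumes "A \<subseteq> V" "B \<subseteq> V" and f: "monomorphism E A B f"
  shows "monomorphism F (\<phi> ` A) (\<phi> ` B) (\<phi> \<circ> f \<circ> \<psi>)"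
proof -
  have fAB: "f ` A \<subseteq> B" and "inj_on f A" and fE: "\<And>x y. x \<in> A \<Longrightarrow> y \<in> A \<Longrightarrow> E x y \<Longrightarrow> E (f x) (f y)"
    using f unfolding monomorphism_def by auto
  have conj: "(\<phi> \<circ> f \<circ> \<psi>) (\<phi> a) = \<phi> (f a)" if "a \<in> A" for a
    using that \<open>A \<subseteq> V\<close> \<psi>\<phi> by auto
  have "inj_on \<phi> (f ` A)"
    using fAB \<open>B \<subseteq> V\<close> \<psi>\<phi> by (metis inj_on_inverseI subset_iff)
  then have "inj_on (\<phi> \<circ> f) A" using \<open>inj_on f A\<close> comp_inj_on by blast
  then have "inj_on ((\<phi> \<circ> f \<circ> \<psi>) \<circ> \<phi>) A"
    by (rule inj_on_cong[THEN iffD1, rotated]) (use \<open>A \<subseteq> V\<close> \<psi>\<phi> in auto)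
  moreover have "F ((\<phi> \<circ> f \<circ> \<psi>) x) ((\<phi> \<circ> f \<circ> \<psi>) y)"
    if xy: "x \<in> \<phi> ` A" "y \<in> \<phi> ` A" "F x y" for x y
  proof -
    obtain a b where ab: "a \<in> A" "b \<in> A" "x = \<phi> a" "y = \<phi> b" using xy by blast
    have V: "a \<in> V" "b \<in> V" "f a \<in> V" "f b \<in> V" using ab fAB assms(1,2) by auto
    then have "E a b" using xy(3) ab \<phi>E by simp
    then have "E (f a) (f b)" using ab fE by blast
    then show ?thesis using V ab conj \<phi>E by simp
  qed
  ultimately show ?thesis
    unfolding monomorphism_def using fAB conj by (auto intro: inj_on_imageI)
qed

lemma endomorphism_conjugate:
  assumes "endomorphism W F h"
  shows "endomorphism V E (\<psi> \<circ> h \<circ> \<phi>)"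
proof -
  have hW: "h ` W \<subseteq> W" and hF: "\<And>x y. x \<in> W \<Longrightarrow> y \<in> W \<Longrightarrow> F x y \<Longrightarrow> F (h x) (h y)"
    using assms unfolding endomorphism_def by auto
  have "E (\<psi> (h (\<phi> x))) (\<psi> (h (\<phi> y)))" if "x \<in> V" "y \<in> V" "E x y" for x y
  proof -
    have "\<phi> x \<in> W" "\<phi> y \<in> W" "h (\<phi> x) \<in> W" "h (\<phi> y) \<in> W" using that \<phi> hW by auto
    then show ?thesis using that \<phi>E hF \<psi> \<phi>\<psi> by (simp add: image_subset_iff)
  qed
  then show ?thesis unfolding endomorphism_def using \<phi> \<psi> hW by (auto simp: image_subset_iff)
qed

lemma ME_homogeneous_conjugate:
  assumes ME: "ME_homogeneous W F"
  shows "ME_homogeneous V E"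
  unfolding ME_homogeneous_def
proof (intro allI impI, elim conjE)
  fix A B f
  assume A: "finite A" "A \<subseteq> V" and B: "finite B" "B \<subseteq> V" and f: "monomorphism E A B f"
  have "monomorphism F (\<phi> ` A) (\<phi> ` B) (\<phi> \<circ> f \<circ> \<psi>)"
    using A(2) B(2) f by (rule monomorphism_conjugate)
  moreover have "\<phi> ` A \<subseteq> W" "\<phi> ` B \<subseteq> W" using A B \<phi> by auto
  ultimately have "\<exists>h. endomorphism W F h \<and> h ` W = W \<and> (\<forall>x\<in>\<phi> ` A. h x = (\<phi> \<circ> f \<circ> \<psi>) x)"
    using A B
    by (intro ME[unfolded ME_homogeneous_def, rule_format, of "\<phi> ` A" "\<phi> ` B" "\<phi> \<circ> f \<circ> \<psi>"])
      auto
  then obtain h where h: "endomorphism W F h" "h ` W = W" "\<forall>x\<in>\<phi> ` A. h x = (\<phi> \<circ> f \<circ> \<psi>) x"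
    by blast
  have "endomorphism V E (\<psi> \<circ> h \<circ> \<phi>)" using h(1) by (rule endomorphism_conjugate)
  moreover have "(\<psi> \<circ> h \<circ> \<phi>) ` V = V"
    using h(2) inverse_pair_image_eq by (metis image_comp)
  moreover have "(\<psi> \<circ> h \<circ> \<phi>) x = f x" if "x \<in> A" for x
  proof -
    have "f x \<in> V" using that f B unfolding monomorphism_def by auto
    then show ?thesis using that h(3) A \<psi>\<phi> by auto
  qed
  ultimately show "\<exists>h. endomorphism V E h \<and> h ` V = V \<and> (\<forall>x\<in>A. h x = f x)" by blast
qed

end

lemma ME_homogeneous_graph_iso:
  assumes "graph_iso V E W F" "ME_homogeneous W F"
  shows "ME_homogeneous V E"
proof -
  obtain \<phi> where \<phi>: "bij_betw \<phi> V W" and \<phi>E: "\<And>x y. x \<in> V \<Longrightarrow> y \<in> V \<Longrightarrow> E x y \<longleftrightarrow> F (\<phi> x) (\<phi> y)"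
    using assms(1) unfolding graph_iso_def by blast
  show ?thesis
  proof (rule ME_homogeneous_conjugate[where W = W and F = F and \<phi> = \<phi> and \<psi> = "inv_into V \<phi>"])
    show "\<phi> ` V \<subseteq> W" "inv_into V \<phi> ` W \<subseteq> V"
      using \<phi> bij_betw_inv_into by (blast dest: bij_betwE)+
    show "inv_into V \<phi> (\<phi> x) = x" if "x \<in> V" for x
      using \<phi> that by (simp add: bij_betw_inv_into_left)
    show "\<phi> (inv_into V \<phi> y) = y" if "y \<in> W" for y
      using \<phi> that by (simp add: bij_betw_inv_into_right)
  qed (use \<phi>E assms(2) in auto)
qed

section \<open>Disjoint unions of cliques\<close>

lemma bij_betw_Times_blocks:
  assumes g: "bij_betw g I Q" and e: "\<And>q. q \<in> Q \<Longrightarrow> bij_betw (e q) S q"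
    and Q: "pairwise disjnt Q"
  shows "bij_betw (\<lambda>(i, j). e (g i) j) (I \<times> S) (\<Union>Q)"
proof -
  have gQ: "g i \<in> Q" if "i \<in> I" for i using g that bij_betwE by blast
  have mem: "e (g i) j \<in> g i" if "i \<in> I" "j \<in> S" for i j
    using e[OF gQ[OF that(1)]] that(2) bij_betwE by blast
  have "inj_on (\<lambda>(i, j). e (g i) j) (I \<times> S)"
  proof (rule inj_onI, clarify)
    fix i j i' j' assume ij: "i \<in> I" "j \<in> S" "i' \<in> I" "j' \<in> S" and eq: "e (g i) j = e (g i') j'"
    then have "\<not> disjnt (g i) (g i')" using mem by (metis disjnt_iff)
    then have "g i = g i'" using Q gQ ij by (metis pairwiseD)
    then have "i = i'" using g ij by (metis bij_betw_imp_inj_on inj_onD)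
    moreover have "j = j'" using eq e[OF gQ] ij \<open>g i = g i'\<close> by (metis bij_betw_imp_inj_on inj_onD)
    ultimately show "i = i' \<and> j = j'" ..
  qed
  moreover have "\<Union>Q \<subseteq> (\<lambda>(i, j). e (g i) j) ` (I \<times> S)"
  proof
    fix v assume "v \<in> \<Union>Q"
    then obtain q where q: "q \<in> Q" "v \<in> q" by blast
    then obtain i where i: "i \<in> I" "g i = q" using g by (metis bij_betw_imp_surj_on imageE)
    obtain j where "j \<in> S" "e q j = v" using e[OF q(1)] q(2) by (metis bij_betw_imp_surj_on imageE)
    then show "v \<in> (\<lambda>(i, j). e (g i) j) ` (I \<times> S)" using i by force
  qed
  ultimately show ?thesis unfolding bij_betw_def using mem gQ by fastforce
qed

abbreviation (input) I_omega_K_on_E :: "'b set \<Rightarrow> nat \<times> 'b \<Rightarrow> nat \<times> 'b \<Rightarrow> bool" where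
  "I_omega_K_on_E S \<equiv> lex_E UNIV edgeless_E S (complete_E S)"

lemma I_omega_K_on_E_iff:
  "I_omega_K_on_E S p q \<longleftrightarrow> snd p \<in> S \<and> snd q \<in> S \<and> fst p = fst q \<and> snd p \<noteq> snd q"
  unfolding lex_E_def edgeless_E_def complete_E_def by (auto simp: mem_Times_iff)

lemma graph_iso_I_omega_K_on_if_partition:
  fixes C :: "'a \<Rightarrow> 'a set" and S :: "'b set"
  assumes adj: "\<And>x y. x \<in> V \<Longrightarrow> y \<in> V \<Longrightarrow> E x y \<longleftrightarrow> x \<noteq> y \<and> C x = C y"
    and C: "\<And>x. x \<in> V \<Longrightarrow> x \<in> C x" "\<And>x. C x \<subseteq> V" "\<And>x y. x \<in> V \<Longrightarrow> y \<in> C x \<Longrightarrow> C y = C x"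
    and Q: "countable (C ` V)" "infinite (C ` V)"
    and blocks: "\<And>x. x \<in> V \<Longrightarrow> \<exists>b. bij_betw b S (C x)"
  shows "graph_iso V E (UNIV \<times> S) (I_omega_K_on_E S)"
proof -
  let ?g = "from_nat_into (C ` V)"
  have g: "bij_betw ?g UNIV (C ` V)" using bij_betw_from_nat_into[OF Q] .
  obtain e where e: "\<And>q. q \<in> C ` V \<Longrightarrow> bij_betw (e q) S q"
    using blocks bchoice[of "C ` V" "\<lambda>q b. bij_betw b S q"] by blast
  have "pairwise disjnt (C ` V)"
    unfolding pairwise_def disjnt_def using C(2,3) by (metis disjoint_iff image_iff subsetD)
  moreover have "\<Union> (C ` V) = V" using C(1,2) by blast
  ultimately have \<Phi>: "bij_betw (\<lambda>(i, j). e (?g i) j) (UNIV \<times> S) V"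
    using bij_betw_Times_blocks[OF g e] by metis
  have block: "C (e (?g i) j) = ?g i" "e (?g i) j \<in> V" if "j \<in> S" for i j
  proof -
    obtain v where v: "v \<in> V" "?g i = C v" using g by (metis bij_betwE UNIV_I imageE)
    then have "e (?g i) j \<in> C v" using e[of "?g i"] that bij_betwE by blast
    then show "C (e (?g i) j) = ?g i" "e (?g i) j \<in> V" using C(2) C(3)[OF v(1)] v(2) by auto
  qed
  have "E (e (?g i) j) (e (?g i') j') \<longleftrightarrow> I_omega_K_on_E S (i, j) (i', j')"
    if "j \<in> S" "j' \<in> S" for i j i' j'
  proof -
    have "e (?g i) j = e (?g i') j' \<longleftrightarrow> (i, j) = (i', j')"
      using inj_on_eq_iff[OF bij_betw_imp_inj_on[OF \<Phi>], of "(i, j)" "(i', j')"] that by simp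
    then have "E (e (?g i) j) (e (?g i') j') \<longleftrightarrow> (i, j) \<noteq> (i', j') \<and> ?g i = ?g i'"
      using adj block that by simp
    also have "\<dots> \<longleftrightarrow> I_omega_K_on_E S (i, j) (i', j')"
      using g that by (auto simp: I_omega_K_on_E_iff bij_betw_def inj_on_eq_iff)
    finally show ?thesis .
  qed
  then show ?thesis using graph_iso_of_inverse[OF \<Phi>] by auto
qed

lemma monomorphism_I_omega_K_on_same_fst:
  assumes f: "monomorphism (I_omega_K_on_E S) A B f" and "A \<subseteq> UNIV \<times> S"
    and "a \<in> A" "a' \<in> A" "fst a = fst a'"
  shows "fst (f a) = fst (f a')"
proof (cases "a = a'")
  case False
  then have "I_omega_K_on_E S a a'" using assms(2-5) by (auto simp: I_omega_K_on_E_iff prod_eq_iff)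
  then have "I_omega_K_on_E S (f a) (f a')" using f assms(3,4) unfolding monomorphism_def by blast
  then show ?thesis by (simp add: I_omega_K_on_E_iff)
qed simp

lemma monomorphism_I_omega_K_on_fst_extend:
  assumes f: "monomorphism (I_omega_K_on_E S) A B f" and A: "finite A" "A \<subseteq> UNIV \<times> S"
  obtains \<tau> :: "nat \<Rightarrow> nat" where "surj \<tau>" "\<And>a. a \<in> A \<Longrightarrow> \<tau> (fst a) = fst (f a)"
proof -
  define \<sigma> where "\<sigma> i = fst (f (SOME a. a \<in> A \<and> fst a = i))" for i
  have \<sigma>: "\<sigma> (fst a) = fst (f a)" if "a \<in> A" for a
  proof -
    let ?b = "SOME b. b \<in> A \<and> fst b = fst a"
    have "?b \<in> A" "fst ?b = fst a" using someI[of "\<lambda>b. b \<in> A \<and> fst b = fst a" a] that by auto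
    then show ?thesis
      unfolding \<sigma>_def using monomorphism_I_omega_K_on_same_fst[OF f A(2), of ?b a] that by simp
  qed
  obtain \<tau> where "surj \<tau>" "\<forall>i\<in>fst ` A. \<tau> i = \<sigma> i"
    by (rule countable_extend_to_surjection[of UNIV "fst ` A" \<sigma>]) (use A(1) in auto)
  then show ?thesis using that \<sigma> by simp
qed

lemma monomorphism_I_omega_K_on_snd_extend:
  assumes S: "countable S" and f: "monomorphism (I_omega_K_on_E S) A B f"
    and A: "finite A" "A \<subseteq> UNIV \<times> S" and B: "B \<subseteq> UNIV \<times> S"
  obtains \<pi> where "\<And>i. bij_betw (\<pi> i) S S" "\<And>i j. (i, j) \<in> A \<Longrightarrow> \<pi> i j = snd (f (i, j))"
proof -
  have fAB: "f ` A \<subseteq> B" and "inj_on f A" using f unfolding monomorphism_def by auto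
  have "\<exists>\<pi>. bij_betw \<pi> S S \<and> (\<forall>j\<in>{j. (i, j) \<in> A}. \<pi> j = snd (f (i, j)))" for i
  proof -
    have "{j. (i, j) \<in> A} \<subseteq> snd ` A" by force
    then have "finite {j. (i, j) \<in> A}" using A(1) by (simp add: finite_subset)
    moreover have "{j. (i, j) \<in> A} \<subseteq> S" using A(2) by auto
    moreover have "inj_on (\<lambda>j. snd (f (i, j))) {j. (i, j) \<in> A}"
    proof (rule inj_onI)
      fix j j' assume jj': "j \<in> {j. (i, j) \<in> A}" "j' \<in> {j. (i, j) \<in> A}"
        and eq: "snd (f (i, j)) = snd (f (i, j'))"
      then have "f (i, j) = f (i, j')"
        using monomorphism_I_omega_K_on_same_fst[OF f A(2), of "(i, j)" "(i, j')"]
        by (simp add: prod_eq_iff)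
      then show "j = j'" using \<open>inj_on f A\<close> jj' by (simp add: inj_on_eq_iff)
    qed
    moreover have "(\<lambda>j. snd (f (i, j))) ` {j. (i, j) \<in> A} \<subseteq> S" using fAB B by force
    ultimately obtain \<pi> where "bij_betw \<pi> S S" "\<forall>j\<in>{j. (i, j) \<in> A}. \<pi> j = snd (f (i, j))"
      by (rule countable_extend_inj_on_to_permutation[OF S])
    then show ?thesis by blast
  qed
  then show ?thesis using that by (metis mem_Collect_eq)
qed

lemma endomorphism_I_omega_K_on:
  fixes \<tau> :: "nat \<Rightarrow> nat" and \<pi> :: "nat \<Rightarrow> 'b \<Rightarrow> 'b"
  assumes \<tau>: "surj \<tau>" and \<pi>: "\<And>i. bij_betw (\<pi> i) S S"
  shows "endomorphism (UNIV \<times> S) (I_omega_K_on_E S) (\<lambda>(i, j). (\<tau> i, \<pi> i j))"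
    and "(\<lambda>(i, j). (\<tau> i, \<pi> i j)) ` (UNIV \<times> S) = UNIV \<times> S"
proof -
  have \<pi>S: "\<pi> i ` S = S" and \<pi>inj: "inj_on (\<pi> i) S" for i
    using \<pi> unfolding bij_betw_def by auto
  show "endomorphism (UNIV \<times> S) (I_omega_K_on_E S) (\<lambda>(i, j). (\<tau> i, \<pi> i j))"
    unfolding endomorphism_def I_omega_K_on_E_iff using \<pi>S \<pi>inj by (auto dest: inj_onD)
  show "(\<lambda>(i, j). (\<tau> i, \<pi> i j)) ` (UNIV \<times> S) = UNIV \<times> S"
  proof (intro subset_antisym subsetI)
    fix q :: "nat \<times> 'b" assume q: "q \<in> UNIV \<times> S"
    obtain i where i: "\<tau> i = fst q" using \<tau> by (metis surjD)
    obtain j where j: "j \<in> S" "\<pi> i j = snd q" using q \<pi>S by (metis mem_Times_iff imageE)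
    have "q = (\<lambda>(i, j). (\<tau> i, \<pi> i j)) (i, j)" using i j by simp
    then show "q \<in> (\<lambda>(i, j). (\<tau> i, \<pi> i j)) ` (UNIV \<times> S)" using j(1) by blast
  qed (use \<pi>S in auto)
qed

lemma ME_homogeneous_I_omega_K_on:
  assumes S: "countable S"
  shows "ME_homogeneous (UNIV \<times> S) (I_omega_K_on_E S)"
  unfolding ME_homogeneous_def
proof (intro allI impI, elim conjE)
  fix A B f
  assume A: "finite A" "A \<subseteq> UNIV \<times> S" and B: "finite B" "B \<subseteq> UNIV \<times> S"
    and f: "monomorphism (I_omega_K_on_E S) A B f"
  obtain \<tau> where \<tau>: "surj \<tau>" "\<And>a. a \<in> A \<Longrightarrow> \<tau> (fst a) = fst (f a)"
    using monomorphism_I_omega_K_on_fst_extend[OF f A] by blast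
  obtain \<pi> where \<pi>: "\<And>i. bij_betw (\<pi> i) S S" "\<And>i j. (i, j) \<in> A \<Longrightarrow> \<pi> i j = snd (f (i, j))"
    using monomorphism_I_omega_K_on_snd_extend[OF S f A B(2)] by blast
  have "(\<lambda>(i, j). (\<tau> i, \<pi> i j)) a = f a" if "a \<in> A" for a
    using that \<tau>(2) \<pi>(2) by (auto simp: prod_eq_iff split: prod.split)
  then show "\<exists>h. endomorphism (UNIV \<times> S) (I_omega_K_on_E S) h \<and> h ` (UNIV \<times> S) = UNIV \<times> S \<and>
      (\<forall>x\<in>A. h x = f x)"
    using endomorphism_I_omega_K_on[OF \<tau>(1) \<pi>(1)]
    by (intro exI[of _ "\<lambda>(i, j). (\<tau> i, \<pi> i j)"]) simp
qed

section \<open>Disconnected ME-homogeneous graphs\<close>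

definition closed_nbhd :: "'a set \<Rightarrow> ('a \<Rightarrow> 'a \<Rightarrow> bool) \<Rightarrow> 'a \<Rightarrow> 'a set" where
  "closed_nbhd V E x = {y \<in> V. y = x \<or> E x y}"

context
  fixes V :: "'a set" and E :: "'a \<Rightarrow> 'a \<Rightarrow> bool"
  assumes G: "graph V E"
begin

lemma graph_sym: "E x y \<Longrightarrow> E y x"
  and graph_vertices: "E x y \<Longrightarrow> x \<in> V \<and> y \<in> V"
  and graph_irrefl: "\<not> E x x"
  using G unfolding graph_def by blast+

lemma graph_rtranclp_sym: "E\<^sup>*\<^sup>* x y \<Longrightarrow> E\<^sup>*\<^sup>* y x"
  using symp_rtranclp[of E] graph_sym by (metis sympD sympI)

lemma endomorphism_rtranclp:
  assumes h: "endomorphism V E h"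
  shows "E\<^sup>*\<^sup>* x y \<Longrightarrow> E\<^sup>*\<^sup>* (h x) (h y)"
proof (induction rule: rtranclp.induct)
  case (rtrancl_into_rtrancl x y z)
  then have "E (h y) (h z)" using h graph_vertices unfolding endomorphism_def by blast
  with rtrancl_into_rtrancl.IH show ?case by (rule rtranclp.rtrancl_into_rtrancl)
qed simp

lemma closed_nbhd_mem: "x \<in> V \<Longrightarrow> x \<in> closed_nbhd V E x"
  and closed_nbhd_subset: "closed_nbhd V E x \<subseteq> V"
  unfolding closed_nbhd_def by auto

lemma disconnected_unreachable:
  assumes "\<not> connected_graph V E"
  obtains z where "z \<in> V" "\<not> E\<^sup>*\<^sup>* x z"
proof -
  obtain u w where uw: "u \<in> V" "w \<in> V" "\<not> E\<^sup>*\<^sup>* u w"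
    using assms unfolding connected_graph_def by blast
  then have "\<not> E\<^sup>*\<^sup>* x u \<or> \<not> E\<^sup>*\<^sup>* x w"
    using graph_rtranclp_sym by (meson rtranclp_trans)
  then show ?thesis using that uw by blast
qed

lemma ME_homogeneous_move_point:
  assumes "ME_homogeneous V E" "a \<in> V" "a' \<in> V"
  obtains h where "endomorphism V E h" "h ` V = V" "h a = a'"
proof -
  have "monomorphism E {a} {a'} (\<lambda>_. a')"
    unfolding monomorphism_def using graph_irrefl by auto
  then show ?thesis
    using assms that unfolding ME_homogeneous_def
    by (metis empty_subsetI finite.simps insert_subset singletonI)
qed

lemma ME_homogeneous_move_nonadjacent_pair:
  assumes "ME_homogeneous V E" "a \<in> V" "b \<in> V" "a \<noteq> b" "\<not> E a b" "a' \<in> V" "b' \<in> V" "a' \<noteq> b'"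
  obtains h where "endomorphism V E h" "h ` V = V" "h a = a'" "h b = b'"
proof -
  define f where "f x = (if x = a then a' else b')" for x
  have "monomorphism E {a, b} {a', b'} f"
    unfolding monomorphism_def f_def using assms(4,5,8) graph_irrefl graph_sym by auto
  then obtain h where "endomorphism V E h" "h ` V = V" "\<forall>x\<in>{a, b}. h x = f x"
    using assms(1-3,6,7) unfolding ME_homogeneous_def
    by (metis empty_subsetI finite.simps insert_subset)
  then show ?thesis using that assms(4) unfolding f_def by auto
qed

context
  assumes ME: "ME_homogeneous V E" and disconnected: "\<not> connected_graph V E"
begin

lemma reachable_imp_adjacent:
  assumes "x \<in> V" "y \<in> V" "x \<noteq> y" "E\<^sup>*\<^sup>* x y"
  shows "E x y"
proof (rule ccontr)
  assume "\<not> E x y"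
  obtain z where z: "z \<in> V" "\<not> E\<^sup>*\<^sup>* x z"
    using disconnected by (rule disconnected_unreachable)
  then have "x \<noteq> z" by auto
  then obtain h where h: "endomorphism V E h" "h x = x" "h y = z"
    using ME_homogeneous_move_nonadjacent_pair[OF ME] assms \<open>\<not> E x y\<close> z(1) by metis
  then show False using endomorphism_rtranclp[OF h(1) assms(4)] z(2) by simp
qed

lemma closed_nbhd_eq:
  assumes "x \<in> V" "y \<in> closed_nbhd V E x"
  shows "closed_nbhd V E y = closed_nbhd V E x"
proof -
  have "E\<^sup>*\<^sup>* x y" using assms unfolding closed_nbhd_def by auto
  then have reach: "E\<^sup>*\<^sup>* x z \<longleftrightarrow> E\<^sup>*\<^sup>* y z" for z
    using graph_rtranclp_sym by (meson rtranclp_trans)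
  have "closed_nbhd V E v = {z \<in> V. E\<^sup>*\<^sup>* v z}" if "v \<in> V" for v
    unfolding closed_nbhd_def using reachable_imp_adjacent that by fastforce
  then show ?thesis using assms closed_nbhd_subset reach by blast
qed

lemma adjacent_iff_closed_nbhd_eq:
  assumes "x \<in> V" "y \<in> V"
  shows "E x y \<longleftrightarrow> x \<noteq> y \<and> closed_nbhd V E x = closed_nbhd V E y"
proof
  assume "E x y"
  moreover have "y \<in> closed_nbhd V E x" using \<open>E x y\<close> assms unfolding closed_nbhd_def by simp
  ultimately show "x \<noteq> y \<and> closed_nbhd V E x = closed_nbhd V E y"
    using assms(1) graph_irrefl closed_nbhd_eq by metis
next
  assume "x \<noteq> y \<and> closed_nbhd V E x = closed_nbhd V E y"
  then show "E x y" using closed_nbhd_mem[OF assms(2)] unfolding closed_nbhd_def by auto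
qed

lemma endomorphism_closed_nbhd:
  assumes h: "endomorphism V E h" and "x \<in> V"
  shows "h ` closed_nbhd V E x \<subseteq> closed_nbhd V E (h x)"
    and "inj_on h (closed_nbhd V E x)"
proof -
  have hE: "E (h y) (h z)" if "y \<in> V" "z \<in> V" "E y z" for y z
    using h that unfolding endomorphism_def by blast
  show "h ` closed_nbhd V E x \<subseteq> closed_nbhd V E (h x)"
    using hE graph_vertices closed_nbhd_mem h \<open>x \<in> V\<close> unfolding closed_nbhd_def endomorphism_def
    by auto
  show "inj_on h (closed_nbhd V E x)"
  proof (rule inj_onI)
    fix y z assume yz: "y \<in> closed_nbhd V E x" "z \<in> closed_nbhd V E x" "h y = h z"
    then have "y \<in> V" "z \<in> V" using closed_nbhd_subset by auto
    moreover have "closed_nbhd V E y = closed_nbhd V E z" using closed_nbhd_eq \<open>x \<in> V\<close> yz by auto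
    ultimately show "y = z"
      using yz(3) hE adjacent_iff_closed_nbhd_eq graph_irrefl by metis
  qed
qed

lemma closed_nbhd_embeds:
  assumes "x \<in> V" "y \<in> V"
  obtains h where "inj_on h (closed_nbhd V E x)" "h ` closed_nbhd V E x \<subseteq> closed_nbhd V E y"
proof -
  obtain h where "endomorphism V E h" "h x = y"
    using ME_homogeneous_move_point[OF ME assms] by metis
  then show ?thesis using that endomorphism_closed_nbhd assms(1) by metis
qed

lemma finite_closed_nbhd_card:
  assumes "x \<in> V" "y \<in> V" "finite (closed_nbhd V E x)"
  shows "finite (closed_nbhd V E y)" "card (closed_nbhd V E y) = card (closed_nbhd V E x)"
proof -
  obtain h where h: "inj_on h (closed_nbhd V E y)" "h ` closed_nbhd V E y \<subseteq> closed_nbhd V E x"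
    using closed_nbhd_embeds assms(2,1) by metis
  obtain h' where h': "inj_on h' (closed_nbhd V E x)" "h' ` closed_nbhd V E x \<subseteq> closed_nbhd V E y"
    using closed_nbhd_embeds assms(1,2) by metis
  show fin: "finite (closed_nbhd V E y)"
    using h assms(3) by (meson finite_imageD finite_subset)
  show "card (closed_nbhd V E y) = card (closed_nbhd V E x)"
    using card_inj_on_le[OF h assms(3)] card_inj_on_le[OF h' fin] by simp
qed

text \<open>The map induced on the finitely many closed neighbourhoods is onto, hence one-to-one.\<close>

lemma surj_endomorphism_reflects_closed_nbhd:
  assumes fin: "finite (closed_nbhd V E ` V)" and h: "endomorphism V E h" "h ` V = V"
    and xy: "x \<in> V" "y \<in> V" "closed_nbhd V E (h x) = closed_nbhd V E (h y)"
  shows "closed_nbhd V E x = closed_nbhd V E y"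
proof -
  let ?N = "closed_nbhd V E"
  define \<mu> where "\<mu> K = ?N (h (SOME k. k \<in> K))" for K
  have hV: "h v \<in> V" if "v \<in> V" for v using h(1) that unfolding endomorphism_def by auto
  have \<mu>: "\<mu> (?N v) = ?N (h v)" if "v \<in> V" for v
  proof -
    have "(SOME k. k \<in> ?N v) \<in> ?N v" using closed_nbhd_mem[OF that] by (rule someI)
    then have "h (SOME k. k \<in> ?N v) \<in> ?N (h v)"
      using endomorphism_closed_nbhd(1)[OF h(1) that] by blast
    then show ?thesis unfolding \<mu>_def using closed_nbhd_eq[OF hV[OF that]] by blast
  qed
  have "\<mu> ` ?N ` V = ?N ` h ` V" unfolding image_comp using \<mu> by (auto intro!: image_cong)
  then have "\<mu> ` ?N ` V = ?N ` V" using h(2) by simp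
  then have "inj_on \<mu> (?N ` V)" using fin by (simp add: eq_card_imp_inj_on)
  then show ?thesis using \<mu> xy by (metis image_eqI inj_onD)
qed

lemma infinite_closed_nbhds:
  assumes "infinite V"
  shows "infinite (closed_nbhd V E ` V)"
proof
  let ?N = "closed_nbhd V E"
  assume fin: "finite (?N ` V)"
  have "\<Union> (?N ` V) = V" using closed_nbhd_mem closed_nbhd_subset by blast
  then have "infinite (\<Union> (?N ` V))" using assms by simp
  then obtain c where c: "c \<in> V" "infinite (?N c)" using fin by (auto simp: finite_UN)
  obtain c' where c': "c' \<in> ?N c" "c' \<noteq> c"
    using infinite_remove[OF c(2)] by (metis Diff_iff ex_in_conv finite.emptyI insertI1)
  obtain d where d: "d \<in> V" "\<not> E\<^sup>*\<^sup>* c d"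
    using disconnected by (rule disconnected_unreachable)
  then have "c \<noteq> d" "\<not> E c d" "?N d \<noteq> ?N c" using closed_nbhd_mem[OF d(1)]
    unfolding closed_nbhd_def by auto
  moreover have "c' \<in> V" using c' closed_nbhd_subset by auto
  ultimately obtain h where h: "endomorphism V E h" "h ` V = V" "h c = c" "h d = c'"
    using ME_homogeneous_move_nonadjacent_pair[OF ME c(1) d(1)] c(1) c'(2) by metis
  have "?N (h d) = ?N (h c)" using closed_nbhd_eq[OF c(1) c'(1)] h(3,4) by simp
  then have "?N d = ?N c"
    using surj_endomorphism_reflects_closed_nbhd[OF fin h(1,2) d(1) c(1)] by simp
  with \<open>?N d \<noteq> ?N c\<close> show False ..
qed

lemma graph_iso_I_omega_K_on_closed_nbhds:
  assumes "countable V" "infinite V" "\<And>x. x \<in> V \<Longrightarrow> \<exists>b. bij_betw b S (closed_nbhd V E x)"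
  shows "graph_iso V E (UNIV \<times> S) (I_omega_K_on_E S)"
  using graph_iso_I_omega_K_on_if_partition[OF adjacent_iff_closed_nbhd_eq closed_nbhd_mem
      closed_nbhd_subset closed_nbhd_eq countable_image[OF assms(1)]
      infinite_closed_nbhds[OF assms(2)] assms(3)] .

end

end

theorem proposition8p4:
  fixes V :: "'a set" and E :: "'a \<Rightarrow> 'a \<Rightarrow> bool"
  assumes "graph V E"
    and "countable V" and "infinite V"
    and "\<not> connected_graph V E"
  shows "ME_homogeneous V E \<longleftrightarrow>
           (graph_iso V E I_omega_K_omega_V I_omega_K_omega_E \<or>
            (\<exists>n::nat. n \<ge> 1 \<and> graph_iso V E (I_omega_K_V n) (I_omega_K_E n)))"
proof
  assume ME: "ME_homogeneous V E"
  let ?N = "closed_nbhd V E"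
  note iso = graph_iso_I_omega_K_on_closed_nbhds[OF assms(1) ME assms(4,2,3)]
  show "graph_iso V E I_omega_K_omega_V I_omega_K_omega_E \<or>
      (\<exists>n::nat. n \<ge> 1 \<and> graph_iso V E (I_omega_K_V n) (I_omega_K_E n))"
  proof (cases "\<exists>x\<in>V. finite (?N x)")
    case True
    then obtain x where x: "x \<in> V" "finite (?N x)" by blast
    have "bij_betw (from_nat_into (?N y)) {..<card (?N x)} (?N y)" if "y \<in> V" for y
      using finite_closed_nbhd_card[OF assms(1) ME assms(4) x(1) that x(2)]
      by (metis bij_betw_from_nat_into_finite)
    moreover have "card (?N x) \<ge> 1"
      using x closed_nbhd_mem[OF assms(1) x(1)]
      by (metis One_nat_def Suc_leI card_gt_0_iff empty_iff)
    ultimately show ?thesis using iso by blast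
  next
    case False
    have "bij_betw (from_nat_into (?N y)) UNIV (?N y)" if "y \<in> V" for y
      using False that assms(2) closed_nbhd_subset[OF assms(1)]
      by (meson bij_betw_from_nat_into countable_subset)
    then show ?thesis using iso by blast
  qed
next
  assume "graph_iso V E I_omega_K_omega_V I_omega_K_omega_E \<or>
      (\<exists>n::nat. n \<ge> 1 \<and> graph_iso V E (I_omega_K_V n) (I_omega_K_E n))"
  then show "ME_homogeneous V E"
    by (auto intro: ME_homogeneous_graph_iso ME_homogeneous_I_omega_K_on simp del: UNIV_Times_UNIV)
qed

end
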